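(* Every positive stochastic choice function on a finite set $X$ is an unrestricted generalized nested logit.
   Context: $X$ is a finite set, $\mathscr{A}$ the nonempty subsets; a stochastic choice function is $p:X\times\mathscr{A}\to[0,1]$ with $\sum_{a\in A}p(a,A)=1$, $p(x,A)=0$ for $x\notin A$, and $p(a,A)>0$ for $a\in A$. $p$ is an unrestricted generalized nested logit if there exist subsets $X_1,\dots,X_K$ of $X$ (not necessarily disjoint), numbers $\alpha^k_x\ge 0$ with $\sum_{k=1}^K\alpha^k_x=1$ for each $x\in X$ and $\alpha^k_x=0$ iff $x\notin X_k$, $u:X\to\mathbb{R}_{++}$ and $\lambda_1,\dots,\lambda_K>0$ such that for every $A\in\mathscr{A}$ and $x\in A$, $p(x,A)=\sum_{k:\,x\in A\cap X_k}\frac{(\alpha^k_x u(x))^{1/\lambda_k}}{\sum_{y\in A\cap X_k}(\alpha^k_y u(y))^{1/\lambda_k}}\cdot\frac{\Big(\sum_{y\in A\cap X_k}(\alpha^k_y u(y))^{1/\lambda_k}\Big)^{\lambda_k}}{\sum_{l:\,A\cap X_l\ne\emptyset}\Big(\sum_{z\in A\cap X_l}(\alpha^l_z u(z))^{1/\lambda_l}\Big)^{\lambda_l}}$. *)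

theory Defs
  imports Complex_Main
begin

definition stochastic_choice :: "'a set \<Rightarrow> ('a \<Rightarrow> 'a set \<Rightarrow> real) \<Rightarrow> bool" where
  "stochastic_choice X p \<longleftrightarrow>
     (\<forall>A. A \<subseteq> X \<and> A \<noteq> {} \<longrightarrow>
        (\<forall>x\<in>X. 0 \<le> p x A \<and> p x A \<le> 1) \<and>
        (\<Sum>a\<in>A. p a A) = 1 \<and>
        (\<forall>x\<in>X. x \<notin> A \<longrightarrow> p x A = 0) \<and>
        (\<forall>a\<in>A. p a A > 0))"

definition nest_sum ::
  "('a set) \<Rightarrow> (nat \<Rightarrow> 'a \<Rightarrow> real) \<Rightarrow> ('a \<Rightarrow> real) \<Rightarrow> real \<Rightarrow> nat \<Rightarrow> 'a set \<Rightarrow> real" where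
  "nest_sum Xk \<alpha> u lam k A = (\<Sum>y\<in>A \<inter> Xk. (\<alpha> k y * u y) powr (1 / lam))"

text \<open>Generalized nested logit choice probability, nests indexed by k < K
  (k = 0..K-1 corresponds to 1..K in the paper).\<close>
definition gnl_prob ::
  "nat \<Rightarrow> (nat \<Rightarrow> 'a set) \<Rightarrow> (nat \<Rightarrow> 'a \<Rightarrow> real) \<Rightarrow> ('a \<Rightarrow> real) \<Rightarrow> (nat \<Rightarrow> real)
     \<Rightarrow> 'a \<Rightarrow> 'a set \<Rightarrow> real" where
  "gnl_prob K N \<alpha> u lam x A =
     (\<Sum>k\<in>{k. k < K \<and> x \<in> A \<inter> N k}.
        ((\<alpha> k x * u x) powr (1 / lam k) / nest_sum (N k) \<alpha> u (lam k) k A) *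
        (nest_sum (N k) \<alpha> u (lam k) k A powr lam k /
         (\<Sum>l\<in>{l. l < K \<and> A \<inter> N l \<noteq> {}}. nest_sum (N l) \<alpha> u (lam l) l A powr lam l)))"

definition unrestricted_gnl :: "'a set \<Rightarrow> ('a \<Rightarrow> 'a set \<Rightarrow> real) \<Rightarrow> bool" where
  "unrestricted_gnl X p \<longleftrightarrow>
     (\<exists>(K::nat) (N::nat \<Rightarrow> 'a set) (\<alpha>::nat \<Rightarrow> 'a \<Rightarrow> real) (u::'a \<Rightarrow> real) (lam::nat \<Rightarrow> real).
        1 \<le> K \<and>
        (\<forall>k<K. N k \<subseteq> X) \<and>
        (\<forall>k<K. \<forall>x\<in>X. \<alpha> k x \<ge> 0) \<and>
        (\<forall>x\<in>X. (\<Sum>k<K. \<alpha> k x) = 1) \<and>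
        (\<forall>k<K. \<forall>x\<in>X. \<alpha> k x = 0 \<longleftrightarrow> x \<notin> N k) \<and>
        (\<forall>x\<in>X. u x > 0) \<and>
        (\<forall>k<K. lam k > 0) \<and>
        (\<forall>A. A \<subseteq> X \<and> A \<noteq> {} \<longrightarrow> (\<forall>x\<in>A. p x A = gnl_prob K N \<alpha> u lam x A)))"

end

theory Submission
  imports Defs
begin

text \<open>Take every subset \<open>B\<close> of \<open>X\<close> as a nest, all with the same exponent \<open>L\<close>, and choose
  \<open>\<alpha>\<close> and \<open>u\<close> so that \<open>\<alpha>\<^sub>B(y) u(y) = w(B) \<pi>\<^sub>B(y)\<^sup>L\<close> for nest weights \<open>w\<close> and probability
  vectors \<open>\<pi>\<^sub>B\<close> on \<open>B\<close>. Writing \<open>\<sigma>\<^sub>B(A) = \<pi>\<^sub>B(A \<inter> B)\<close>, the GNL probability of \<open>x\<close> in \<open>A\<close>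
  becomes \<open>\<Sum>\<^bsub>B \<ni> x\<^esub> w(B) \<sigma>\<^sub>B(A)\<^sup>L\<^sup>-\<^sup>1 \<pi>\<^sub>B(x) / \<Sum>\<^bsub>B \<inter> A \<noteq> {}\<^esub> w(B) \<sigma>\<^sub>B(A)\<^sup>L\<close>, so it suffices to solve
  \<open>p(x, A) \<cdot> denominator = numerator\<close> for the \<open>\<pi>\<^sub>B\<close>. The term \<open>B = A\<close> is \<open>w(A) \<pi>\<^sub>A(x)\<close>, which turns
  the equations into a fixed-point problem for \<open>\<pi>\<close>. With \<open>w(B) = M\<^sup>|\<^sup>B\<^sup>|\<close> and \<open>M\<close> large the nests
  \<open>B \<subset> A\<close> are negligible against \<open>A\<close>; since \<open>p\<close> is bounded below, so is a suitable \<open>\<pi>\<close>, hence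
  \<open>\<sigma>\<^sub>B(A) \<le> 1 - \<delta>\<close> for \<open>B \<not>\<subseteq> A\<close> and these nests are negligible for \<open>L\<close> large. The fixed-point map is
  then a contraction for the \<open>\<ell>\<^sub>1\<close> distance on probability vectors bounded below by \<open>\<delta>\<close>.\<close>

lemma abs_power_diff_le:
  fixes a b c :: real
  assumes "0 \<le> a" "a \<le> c" "0 \<le> b" "b \<le> c"
  shows "\<bar>a ^ n - b ^ n\<bar> \<le> real n * c ^ (n - 1) * \<bar>a - b\<bar>"
proof (cases n)
  case 0
  then show ?thesis by simp
next
  case (Suc m)
  have "a ^ n - b ^ n = (a - b) * (\<Sum>q<Suc m. a ^ q * b ^ (m - q))"
    using Suc diff_power_eq_sum by blast
  then have abs_eq: "\<bar>a ^ n - b ^ n\<bar> = \<bar>a - b\<bar> * (\<Sum>q<Suc m. a ^ q * b ^ (m - q))"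
    using assms by (simp add: abs_mult sum_nonneg)
  have "(\<Sum>q<Suc m. a ^ q * b ^ (m - q)) \<le> (\<Sum>q<Suc m. c ^ m)"
  proof (rule sum_mono)
    fix q assume "q \<in> {..<Suc m}"
    then have "c ^ q * c ^ (m - q) = c ^ m" by (simp flip: power_add)
    moreover have "a ^ q * b ^ (m - q) \<le> c ^ q * c ^ (m - q)"
      using assms by (intro mult_mono power_mono) auto
    ultimately show "a ^ q * b ^ (m - q) \<le> c ^ m" by simp
  qed
  also have "(\<Sum>q<Suc m. c ^ m) = real n * c ^ (n - 1)" using Suc by simp
  finally have "\<bar>a - b\<bar> * (\<Sum>q<Suc m. a ^ q * b ^ (m - q)) \<le> \<bar>a - b\<bar> * (real n * c ^ (n - 1))"
    by (rule mult_left_mono) simp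
  then show ?thesis unfolding abs_eq by (simp add: mult_ac)
qed

lemma abs_power_diff_le_shifted:
  fixes l r s s' :: real
  assumes s: "0 \<le> s" "s \<le> r" "0 \<le> s'" "s' \<le> r" and "r \<le> 1" and "\<bar>s - s'\<bar> \<le> l"
  shows "\<bar>s ^ L - s' ^ L\<bar> \<le> real L * r ^ (L - 2) * l"
proof -
  have "\<bar>s ^ L - s' ^ L\<bar> \<le> real L * r ^ (L - 1) * \<bar>s - s'\<bar>"
    using abs_power_diff_le[OF s] .
  also have "\<dots> \<le> real L * r ^ (L - 2) * l"
    using assms by (intro mult_mono power_decreasing) auto
  finally show ?thesis .
qed

lemma abs_power_mult_diff_le_shifted:
  fixes a a' l r s s' :: real
  assumes s: "0 \<le> s" "s \<le> r" "0 \<le> s'" "s' \<le> r" and "r \<le> 1" and a': "0 \<le> a'" "a' \<le> 1"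
    and l: "\<bar>s - s'\<bar> \<le> l" "\<bar>a - a'\<bar> \<le> l" and "2 \<le> L"
  shows "\<bar>s ^ (L - 1) * a - s' ^ (L - 1) * a'\<bar> \<le> real L * r ^ (L - 2) * l"
proof -
  have "s ^ (L - 1) \<le> r ^ (L - 1)" using s by (intro power_mono) auto
  also have "\<dots> \<le> r ^ (L - 2)" using assms by (intro power_decreasing) auto
  finally have s_pow: "s ^ (L - 1) \<le> r ^ (L - 2)" .
  have "\<bar>s ^ (L - 1) - s' ^ (L - 1)\<bar> \<le> real (L - 1) * r ^ (L - 2) * \<bar>s - s'\<bar>"
    using abs_power_diff_le[OF s, of "L - 1"] by (simp add: numeral_2_eq_2)
  also have "\<dots> \<le> real (L - 1) * r ^ (L - 2) * l"
    using s l by (intro mult_left_mono) auto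
  finally have s_diff: "\<bar>s ^ (L - 1) - s' ^ (L - 1)\<bar> \<le> real (L - 1) * r ^ (L - 2) * l" .
  have "s ^ (L - 1) * a - s' ^ (L - 1) * a' = s ^ (L - 1) * (a - a') + a' * (s ^ (L - 1) - s' ^ (L - 1))"
    by (simp add: algebra_simps)
  then have "\<bar>s ^ (L - 1) * a - s' ^ (L - 1) * a'\<bar>
      \<le> s ^ (L - 1) * \<bar>a - a'\<bar> + a' * \<bar>s ^ (L - 1) - s' ^ (L - 1)\<bar>"
    using s a' abs_triangle_ineq[of "s ^ (L - 1) * (a - a')" "a' * (s ^ (L - 1) - s' ^ (L - 1))"]
    by (simp add: abs_mult)
  also have "\<dots> \<le> r ^ (L - 2) * l + 1 * (real (L - 1) * r ^ (L - 2) * l)"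
    using s_pow s_diff s a' l by (intro add_mono mult_mono) auto
  also have "\<dots> = real L * r ^ (L - 2) * l"
    using assms by (simp add: algebra_simps)
  finally show ?thesis .
qed

lemma ex_nat_times_power_le:
  fixes r \<epsilon> :: real
  assumes "0 \<le> r" "r < 1" "0 < \<epsilon>"
  shows "\<exists>L::nat. 2 \<le> L \<and> real L * r ^ (L - 2) \<le> \<epsilon>"
proof -
  have "(\<lambda>j. of_nat j * r ^ j + 2 * r ^ j) \<longlonglongrightarrow> 0 + 2 * 0"
    using assms
    by (intro tendsto_add tendsto_mult tendsto_const powser_times_n_limit_0 LIMSEQ_realpow_zero) auto
  then have "(\<lambda>j. of_nat j * r ^ j + 2 * r ^ j) \<longlonglongrightarrow> 0" by simp
  then obtain N where "\<forall>n\<ge>N. norm (of_nat n * r ^ n + 2 * r ^ n - 0) < \<epsilon>"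
    using assms(3) unfolding LIMSEQ_iff by blast
  then have "\<bar>real N * r ^ N + 2 * r ^ N\<bar> < \<epsilon>" by auto
  then have "real (N + 2) * r ^ (N + 2 - 2) \<le> \<epsilon>" by (simp add: algebra_simps)
  then show ?thesis by (intro exI[of _ "N + 2"]) auto
qed

lemma sum_enumeration:
  fixes K :: nat
  assumes "bij_betw e {0..<K} S"
  shows "(\<Sum>k\<in>{k. k < K \<and> P (e k)}. g (e k)) = (\<Sum>B\<in>{B\<in>S. P B}. g B)"
proof -
  have fin: "finite S" using bij_betw_finite[OF assms] by simp
  have "(\<Sum>k\<in>{k. k < K \<and> P (e k)}. g (e k)) = (\<Sum>k\<in>{k\<in>{0..<K}. P (e k)}. g (e k))"
    by (rule sum.cong) auto
  also have "\<dots> = (\<Sum>k\<in>{0..<K}. if P (e k) then g (e k) else 0)"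
    by (rule sum.inter_filter) simp
  also have "\<dots> = (\<Sum>B\<in>S. if P B then g B else 0)"
    by (rule sum.reindex_bij_betw[OF assms])
  also have "\<dots> = (\<Sum>B\<in>{B\<in>S. P B}. g B)"
    using fin by (rule sum.inter_filter[symmetric])
  finally show ?thesis .
qed

lemma powr_inverse_mult_power:
  fixes a b :: real
  assumes "0 < a" "0 \<le> b" "0 < n"
  shows "(a * b ^ n) powr (1 / real n) = a powr (1 / real n) * b"
proof -
  have "(b ^ n) powr (1 / real n) = b"
  proof (cases "b = 0")
    case True
    then show ?thesis using assms by simp
  next
    case False
    then have "b ^ n = b powr real n" using assms by (simp add: powr_realpow)
    then show ?thesis using assms by (simp add: powr_powr)
  qed
  then show ?thesis using assms by (simp add: powr_mult)
qed

section \<open>Generalized nested logit with all subsets as nests\<close>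

definition mass :: "('a set \<Rightarrow> 'a \<Rightarrow> real) \<Rightarrow> 'a set \<Rightarrow> 'a set \<Rightarrow> real" where
  "mass \<pi> B T = (\<Sum>y\<in>T. \<pi> B y)"

locale subset_nests =
  fixes X :: "'a set" and w :: "'a set \<Rightarrow> real" and \<pi> :: "'a set \<Rightarrow> 'a \<Rightarrow> real" and L :: nat
  assumes finite_X: "finite X"
    and w_pos: "\<And>B. B \<subseteq> X \<Longrightarrow> 0 < w B"
    and \<pi>_pos: "\<And>B y. B \<subseteq> X \<Longrightarrow> y \<in> B \<Longrightarrow> 0 < \<pi> B y"
    and L_pos: "0 < L"
begin

definition utility :: "'a \<Rightarrow> real" where
  "utility y = (\<Sum>B\<in>Pow X. if y \<in> B then w B * \<pi> B y ^ L else 0)"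

definition allocation :: "'a set \<Rightarrow> 'a \<Rightarrow> real" where
  "allocation B y = (if y \<in> B then w B * \<pi> B y ^ L / utility y else 0)"

lemma utility_pos:
  assumes "y \<in> X"
  shows "0 < utility y"
proof -
  have "0 \<le> (if y \<in> B then w B * \<pi> B y ^ L else 0)" if "B \<in> Pow X - {{y}}" for B
  proof (cases "y \<in> B")
    case True
    then have "0 < w B" "0 < \<pi> B y" using that w_pos \<pi>_pos by auto
    then show ?thesis by simp
  qed simp
  then have "(if y \<in> {y} then w {y} * \<pi> {y} y ^ L else 0) \<le> utility y"
    unfolding utility_def using assms finite_X by (intro member_le_sum) auto
  moreover have "0 < w {y} * \<pi> {y} y ^ L" using assms w_pos \<pi>_pos by simp
  ultimately show ?thesis by simp
qed

lemma allocation_pos: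
  assumes "B \<subseteq> X" "y \<in> B"
  shows "0 < allocation B y"
proof -
  have "0 < w B" "0 < \<pi> B y" "0 < utility y" using assms w_pos \<pi>_pos utility_pos by auto
  then show ?thesis unfolding allocation_def using assms(2) by simp
qed

lemma allocation_eq_0_iff:
  assumes "B \<subseteq> X"
  shows "allocation B y = 0 \<longleftrightarrow> y \<notin> B"
proof (cases "y \<in> B")
  case True
  then show ?thesis using allocation_pos[OF assms True] by simp
qed (simp add: allocation_def)

lemma allocation_nonneg: "B \<subseteq> X \<Longrightarrow> 0 \<le> allocation B y"
  using allocation_pos[of B y] by (cases "y \<in> B") (auto simp: allocation_def)

lemma allocation_utility_powr:
  assumes "B \<subseteq> X" "y \<in> B"
  shows "(allocation B y * utility y) powr (1 / real L) = w B powr (1 / real L) * \<pi> B y"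
proof -
  have "allocation B y * utility y = w B * \<pi> B y ^ L"
    using assms utility_pos[of y] by (auto simp: allocation_def)
  then show ?thesis
    using assms w_pos \<pi>_pos L_pos by (simp add: powr_inverse_mult_power less_imp_le)
qed

lemma sum_allocation:
  assumes "y \<in> X"
  shows "(\<Sum>B\<in>Pow X. allocation B y) = 1"
proof -
  have "(\<Sum>B\<in>Pow X. allocation B y) = utility y / utility y"
    unfolding allocation_def utility_def sum_divide_distrib by (intro sum.cong) auto
  then show ?thesis using utility_pos[OF assms] by simp
qed

lemma mass_pos:
  assumes "B \<subseteq> X" "A \<inter> B \<noteq> {}"
  shows "0 < mass \<pi> B (A \<inter> B)"
  unfolding mass_def using assms \<pi>_pos by (intro sum_pos finite_subset[OF _ finite_X]) auto

lemma nest_sum_allocation: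
  assumes "B \<subseteq> X" "\<alpha> k = allocation B"
  shows "nest_sum B \<alpha> utility (real L) k A = w B powr (1 / real L) * mass \<pi> B (A \<inter> B)"
  unfolding nest_sum_def mass_def sum_distrib_left
  using assms allocation_utility_powr by (intro sum.cong) auto

lemma nest_sum_allocation_powr:
  assumes "B \<subseteq> X" "\<alpha> k = allocation B" "A \<inter> B \<noteq> {}"
  shows "nest_sum B \<alpha> utility (real L) k A powr real L = w B * mass \<pi> B (A \<inter> B) ^ L"
proof -
  have "nest_sum B \<alpha> utility (real L) k A = w B powr (1 / real L) * mass \<pi> B (A \<inter> B)"
    by (rule nest_sum_allocation[of B \<alpha> k A]) (use assms in auto)
  moreover have "0 < w B" "0 < mass \<pi> B (A \<inter> B)" using w_pos mass_pos assms by auto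
  ultimately show ?thesis using L_pos by (simp add: powr_mult powr_powr powr_realpow)
qed

lemma gnl_prob_eq:
  assumes enum: "bij_betw e {0..<K} (Pow X)" and "A \<subseteq> X" "x \<in> A"
  shows "gnl_prob K e (\<lambda>k. allocation (e k)) utility (\<lambda>_. real L) x A
    = (\<Sum>B\<in>{B\<in>Pow X. x \<in> B}. w B * mass \<pi> B (A \<inter> B) ^ (L - 1) * \<pi> B x)
      / (\<Sum>B\<in>{B\<in>Pow X. A \<inter> B \<noteq> {}}. w B * mass \<pi> B (A \<inter> B) ^ L)"
proof -
  define D where "D = (\<Sum>B\<in>{B\<in>Pow X. A \<inter> B \<noteq> {}}. w B * mass \<pi> B (A \<inter> B) ^ L)"
  define ns where "ns k = nest_sum (e k) (\<lambda>k. allocation (e k)) utility (real L) k A" for k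
  have eX: "k < K \<Longrightarrow> e k \<subseteq> X" for k using bij_betw_apply[OF enum] by auto
  have ns_eq: "ns k = w (e k) powr (1 / real L) * mass \<pi> (e k) (A \<inter> e k)" if "k < K" for k
    unfolding ns_def using eX[OF that] by (rule nest_sum_allocation) simp
  have ns_powr: "ns k powr real L = w (e k) * mass \<pi> (e k) (A \<inter> e k) ^ L"
    if "k < K" "A \<inter> e k \<noteq> {}" for k
    unfolding ns_def using eX[OF that(1)] _ that(2) by (rule nest_sum_allocation_powr) simp
  have "(\<Sum>l\<in>{l. l < K \<and> A \<inter> e l \<noteq> {}}. ns l powr real L)
      = (\<Sum>l\<in>{l. l < K \<and> A \<inter> e l \<noteq> {}}. w (e l) * mass \<pi> (e l) (A \<inter> e l) ^ L)"
    by (intro sum.cong refl) (simp add: ns_powr)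
  also have "\<dots> = D" unfolding D_def by (rule sum_enumeration[OF enum])
  finally have den: "(\<Sum>l\<in>{l. l < K \<and> A \<inter> e l \<noteq> {}}. ns l powr real L) = D" .
  have "gnl_prob K e (\<lambda>k. allocation (e k)) utility (\<lambda>_. real L) x A
      = (\<Sum>k\<in>{k. k < K \<and> x \<in> A \<inter> e k}. w (e k) * mass \<pi> (e k) (A \<inter> e k) ^ (L - 1) * \<pi> (e k) x / D)"
    unfolding gnl_prob_def ns_def[symmetric] den
  proof (intro sum.cong refl)
    fix k assume "k \<in> {k. k < K \<and> x \<in> A \<inter> e k}"
    then have k: "k < K" "e k \<subseteq> X" "x \<in> e k" "A \<inter> e k \<noteq> {}" using eX by auto
    define m where "m = mass \<pi> (e k) (A \<inter> e k)"
    have m: "0 < m" unfolding m_def using k mass_pos by auto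
    have "(allocation (e k) x * utility x) powr (1 / real L) / ns k = \<pi> (e k) x / m"
      unfolding allocation_utility_powr[OF k(2,3)] ns_eq[OF k(1)] m_def[symmetric]
      using w_pos[OF k(2)] by simp
    moreover have "ns k powr real L = w (e k) * (m ^ (L - 1) * m)"
      unfolding ns_powr[OF k(1,4)] m_def[symmetric] using power_minus_mult[OF L_pos, of m] by simp
    ultimately show "(allocation (e k) x * utility x) powr (1 / real L) / ns k * (ns k powr real L / D)
        = w (e k) * mass \<pi> (e k) (A \<inter> e k) ^ (L - 1) * \<pi> (e k) x / D"
      unfolding m_def[symmetric] using m by simp
  qed
  also have "\<dots> = (\<Sum>B\<in>{B\<in>Pow X. x \<in> A \<inter> B}. w B * mass \<pi> B (A \<inter> B) ^ (L - 1) * \<pi> B x / D)"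
    by (rule sum_enumeration[OF enum])
  also have "\<dots> = (\<Sum>B\<in>{B\<in>Pow X. x \<in> B}. w B * mass \<pi> B (A \<inter> B) ^ (L - 1) * \<pi> B x) / D"
    using assms(3) by (simp add: sum_divide_distrib)
  finally show ?thesis unfolding D_def .
qed

theorem unrestricted_gnl_if_balanced:
  assumes balance: "\<And>A x. A \<subseteq> X \<Longrightarrow> x \<in> A \<Longrightarrow>
      p x A * (\<Sum>B\<in>{B\<in>Pow X. A \<inter> B \<noteq> {}}. w B * mass \<pi> B (A \<inter> B) ^ L)
    = (\<Sum>B\<in>{B\<in>Pow X. x \<in> B}. w B * mass \<pi> B (A \<inter> B) ^ (L - 1) * \<pi> B x)"
  shows "unrestricted_gnl X p"
proof -
  define K where "K = card (Pow X)"
  obtain e where enum: "bij_betw e {0..<K} (Pow X)"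
    using ex_bij_betw_nat_finite[of "Pow X"] finite_X unfolding K_def by auto
  have eX: "k < K \<Longrightarrow> e k \<subseteq> X" for k using bij_betw_apply[OF enum] by auto
  show ?thesis
    unfolding unrestricted_gnl_def
  proof (intro exI[of _ K] exI[of _ e] exI[of _ "\<lambda>k. allocation (e k)"] exI[of _ utility]
      exI[of _ "\<lambda>_. real L"] conjI allI impI ballI)
    show "1 \<le> K" unfolding K_def using finite_X by (simp add: Suc_le_eq card_gt_0_iff Pow_not_empty)
    show "e k \<subseteq> X" if "k < K" for k using eX[OF that] .
    show "0 \<le> allocation (e k) x" if "k < K" for k x
      using allocation_nonneg[OF eX[OF that]] .
    show "(\<Sum>k<K. allocation (e k) x) = 1" if "x \<in> X" for x
      using sum.reindex_bij_betw[OF enum, of "\<lambda>B. allocation B x"] sum_allocation[OF that]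
      by (simp add: atLeast0LessThan)
    show "allocation (e k) x = 0 \<longleftrightarrow> x \<notin> e k" if "k < K" for k x
      using allocation_eq_0_iff[OF eX[OF that]] .
    show "0 < utility x" if "x \<in> X" for x using utility_pos[OF that] .
    show "0 < real L" using L_pos by simp
    fix A x assume A: "A \<subseteq> X \<and> A \<noteq> {}" and x: "x \<in> A"
    have "0 < w B * mass \<pi> B (A \<inter> B) ^ L" if "B \<in> {B\<in>Pow X. A \<inter> B \<noteq> {}}" for B
      using that w_pos[of B] mass_pos[of B A] by simp
    then have "0 < (\<Sum>B\<in>{B\<in>Pow X. A \<inter> B \<noteq> {}}. w B * mass \<pi> B (A \<inter> B) ^ L)"
      using A finite_X by (intro sum_pos) auto
    then show "p x A = gnl_prob K e (\<lambda>k. allocation (e k)) utility (\<lambda>_. real L) x A"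
      unfolding gnl_prob_eq[OF enum conjunct1[OF A] x] balance[OF conjunct1[OF A] x, symmetric]
      by simp
  qed
qed

end


section \<open>A contraction whose fixed point balances the nests\<close>

text \<open>The bounds on \<open>M\<close> and \<open>L\<close> make the nests \<open>B \<subset> A\<close> (relative weight at most \<open>1 / M\<close>) and
  \<open>B \<not>\<subseteq> A\<close> (factor \<open>\<sigma>\<^sub>B(A)\<^sup>L\<^sup>-\<^sup>2 \<le> (1 - \<delta>)\<^sup>L\<^sup>-\<^sup>2\<close>) negligible: \<open>\<eta>\<close> bounds the resulting Lipschitz
  constant of one coordinate of \<open>update\<close>, and \<open>\<delta> / (2 \<cdot> 2\<^sup>|\<^sup>X\<^sup>|)\<close> the relative size of each of
  its negative terms, so that \<open>update\<close> keeps \<open>\<pi> \<ge> \<delta>\<close>.\<close>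

locale gnl_contraction =
  fixes X :: "'a set" and p :: "'a \<Rightarrow> 'a set \<Rightarrow> real" and \<delta> M \<eta> :: real and L :: nat
  assumes finite_X: "finite X" and X_ne: "X \<noteq> {}"
    and choice: "stochastic_choice X p"
    and \<delta>_pos: "0 < \<delta>"
    and p_ge: "\<And>A x. A \<subseteq> X \<Longrightarrow> x \<in> A \<Longrightarrow> 2 * \<delta> \<le> p x A"
    and M_ge: "1 \<le> M"
    and M_\<eta>: "1 / M \<le> \<eta>"
    and M_\<delta>: "1 / M \<le> \<delta> / (2 * real (card (Pow X)))"
    and L_ge: "2 \<le> L"
    and L_\<eta>: "M ^ card X * (2 * real L * (1 - \<delta>) ^ (L - 2)) \<le> \<eta>"
    and L_\<delta>: "M ^ card X * (2 * real L * (1 - \<delta>) ^ (L - 2)) \<le> \<delta> / (2 * real (card (Pow X)))"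
    and \<eta>_pos: "0 < \<eta>"
    and \<eta>_small: "\<eta> * (\<Sum>A\<in>Pow X. real (card A)) \<le> 1 / 2"
begin

definition weight :: "'a set \<Rightarrow> real" where
  "weight B = M ^ card B"

definition overlapping :: "'a set \<Rightarrow> 'a set set" where
  "overlapping A = {B \<in> Pow X. B \<noteq> A \<and> A \<inter> B \<noteq> {}}"

definition correction :: "('a set \<Rightarrow> 'a \<Rightarrow> real) \<Rightarrow> 'a set \<Rightarrow> 'a \<Rightarrow> 'a set \<Rightarrow> real" where
  "correction \<pi> A x B = weight B * (p x A * mass \<pi> B (A \<inter> B) ^ L
      - (if x \<in> B then mass \<pi> B (A \<inter> B) ^ (L - 1) * \<pi> B x else 0))"

text \<open>A fixed point of \<open>update\<close> solves the balance equation of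
  \<open>subset_nests.unrestricted_gnl_if_balanced\<close> for the weights \<open>M ^ card B\<close>, solved for the
  contribution \<open>weight A * \<pi> A x\<close> of the nest \<open>B = A\<close>.\<close>

definition update :: "('a set \<Rightarrow> 'a \<Rightarrow> real) \<Rightarrow> 'a set \<Rightarrow> 'a \<Rightarrow> real" where
  "update \<pi> A x = p x A + (\<Sum>B\<in>overlapping A. correction \<pi> A x B) / weight A"

definition admissible :: "('a set \<Rightarrow> 'a \<Rightarrow> real) \<Rightarrow> bool" where
  "admissible \<pi> \<longleftrightarrow> (\<forall>A. A \<subseteq> X \<longrightarrow> A \<noteq> {} \<longrightarrow> (\<forall>x\<in>A. \<delta> \<le> \<pi> A x) \<and> mass \<pi> A A = 1)"

definition l1_dist_on :: "('a set \<Rightarrow> 'a \<Rightarrow> real) \<Rightarrow> ('a set \<Rightarrow> 'a \<Rightarrow> real) \<Rightarrow> 'a set \<Rightarrow> real" where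
  "l1_dist_on \<pi> \<pi>' B = (\<Sum>x\<in>B. \<bar>\<pi> B x - \<pi>' B x\<bar>)"

definition l1_dist :: "('a set \<Rightarrow> 'a \<Rightarrow> real) \<Rightarrow> ('a set \<Rightarrow> 'a \<Rightarrow> real) \<Rightarrow> real" where
  "l1_dist \<pi> \<pi>' = (\<Sum>B\<in>Pow X. l1_dist_on \<pi> \<pi>' B)"

lemma finite_subset_X: "B \<subseteq> X \<Longrightarrow> finite B"
  using finite_X finite_subset by blast

lemma finite_overlapping: "finite (overlapping A)"
  unfolding overlapping_def using finite_X by auto

lemma sum_p: "A \<subseteq> X \<Longrightarrow> A \<noteq> {} \<Longrightarrow> (\<Sum>a\<in>A. p a A) = 1"
  using choice unfolding stochastic_choice_def by blast

lemma p_le_1: "A \<subseteq> X \<Longrightarrow> x \<in> A \<Longrightarrow> p x A \<le> 1"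
  using choice unfolding stochastic_choice_def by blast

lemma p_nonneg: "A \<subseteq> X \<Longrightarrow> x \<in> A \<Longrightarrow> 0 \<le> p x A"
  using p_ge[of A x] \<delta>_pos by simp

lemma \<delta>_card_le: "\<delta> * (2 * real (card X)) \<le> 1"
proof -
  have "real (card X) * (2 * \<delta>) \<le> (\<Sum>x\<in>X. p x X)"
    using sum_bounded_below[of X "2 * \<delta>" "\<lambda>x. p x X"] p_ge by auto
  then show ?thesis using sum_p[OF _ X_ne] by (simp add: algebra_simps)
qed

lemma \<delta>_le_half: "\<delta> \<le> 1 / 2"
proof -
  have "1 \<le> real (card X)" using finite_X X_ne by (simp add: Suc_le_eq card_gt_0_iff)
  then have "\<delta> * 2 \<le> \<delta> * (2 * real (card X))" using \<delta>_pos by simp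
  then show ?thesis using \<delta>_card_le by simp
qed

lemma card_Pow_pos: "0 < real (card (Pow X))"
  using finite_X by (simp add: card_Pow)

lemma weight_pos: "0 < weight B"
  unfolding weight_def using M_ge by simp

lemma weight_ge_1: "1 \<le> weight B"
  unfolding weight_def using M_ge by simp

lemma weight_le: "B \<subseteq> X \<Longrightarrow> weight B \<le> M ^ card X"
  unfolding weight_def using M_ge finite_X by (intro power_increasing card_mono) auto

lemma weight_psubset_le:
  assumes "B \<subset> A" "A \<subseteq> X" "1 / M \<le> c"
  shows "weight B \<le> weight A * c"
proof -
  have "card B < card A" using assms finite_subset_X psubset_card_mono by blast
  then have "M * weight B \<le> weight A"
    unfolding weight_def using M_ge by (metis Suc_leI power_Suc power_increasing)
  then have "weight B \<le> weight A * (1 / M)"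
    using M_ge by (simp add: field_simps)
  also have "\<dots> \<le> weight A * c" using assms(3) weight_pos by (intro mult_left_mono) (auto simp: less_imp_le)
  finally show ?thesis .
qed

lemma admissible_ge: "admissible \<pi> \<Longrightarrow> B \<subseteq> X \<Longrightarrow> y \<in> B \<Longrightarrow> \<delta> \<le> \<pi> B y"
  unfolding admissible_def by blast

lemma admissible_pos:
  assumes "admissible \<pi>" "B \<subseteq> X" "y \<in> B"
  shows "0 < \<pi> B y"
  using admissible_ge[OF assms] \<delta>_pos by linarith

lemma mass_ge:
  assumes "admissible \<pi>" "B \<subseteq> X" "T \<subseteq> B" "y \<in> T"
  shows "\<pi> B y \<le> mass \<pi> B T"
proof -
  have "0 \<le> \<pi> B x" if "x \<in> T" for x
    using admissible_pos[OF assms(1,2)] assms(3) that by (simp add: less_imp_le subset_iff)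
  then show ?thesis
    unfolding mass_def using assms finite_subset_X[of T] by (intro member_le_sum) auto
qed

lemma admissible_le_1:
  assumes "admissible \<pi>" "B \<subseteq> X" "y \<in> B"
  shows "\<pi> B y \<le> 1"
proof -
  have "mass \<pi> B B = 1" using assms unfolding admissible_def by blast
  then show ?thesis using mass_ge[OF assms(1,2) order_refl assms(3)] by simp
qed

lemma mass_subset:
  assumes "admissible \<pi>" "B \<in> overlapping A" "B \<subseteq> A"
  shows "mass \<pi> B (A \<inter> B) = 1"
  using assms Int_absorb1[OF assms(3)] unfolding admissible_def overlapping_def by auto

lemma mass_not_subset:
  assumes "admissible \<pi>" "B \<in> overlapping A" "\<not> B \<subseteq> A"
  shows "\<delta> \<le> mass \<pi> B (A \<inter> B)" "mass \<pi> B (A \<inter> B) \<le> 1 - \<delta>"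
proof -
  have B: "B \<subseteq> X" "B \<noteq> {}" using assms unfolding overlapping_def by auto
  obtain y where y: "y \<in> A \<inter> B" using assms unfolding overlapping_def by auto
  obtain z where z: "z \<in> B - A" using assms by auto
  show "\<delta> \<le> mass \<pi> B (A \<inter> B)"
    using mass_ge[OF assms(1) B(1), of "A \<inter> B" y] y admissible_ge[OF assms(1) B(1), of y] by auto
  have "\<delta> \<le> mass \<pi> B (B - A)"
    using mass_ge[OF assms(1) B(1), of "B - A" z] z admissible_ge[OF assms(1) B(1), of z] by auto
  moreover have "mass \<pi> B B = mass \<pi> B (A \<inter> B) + mass \<pi> B (B - A)"
    unfolding mass_def using finite_subset_X[OF B(1)]
    by (metis Int_commute sum.Int_Diff)
  moreover have "mass \<pi> B B = 1" using assms(1) B unfolding admissible_def by auto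
  ultimately show "mass \<pi> B (A \<inter> B) \<le> 1 - \<delta>" by linarith
qed

lemma l1_dist_on_nonneg: "0 \<le> l1_dist_on \<pi> \<pi>' B"
  unfolding l1_dist_on_def by (simp add: sum_nonneg)

lemma l1_dist_nonneg: "0 \<le> l1_dist \<pi> \<pi>'"
  unfolding l1_dist_def by (simp add: sum_nonneg l1_dist_on_nonneg)

lemma abs_diff_le_l1_dist_on: "B \<subseteq> X \<Longrightarrow> x \<in> B \<Longrightarrow> \<bar>\<pi> B x - \<pi>' B x\<bar> \<le> l1_dist_on \<pi> \<pi>' B"
  unfolding l1_dist_on_def using finite_subset_X by (intro member_le_sum) auto

lemma abs_diff_le_l1_dist:
  assumes "B \<subseteq> X" "x \<in> B"
  shows "\<bar>\<pi> B x - \<pi>' B x\<bar> \<le> l1_dist \<pi> \<pi>'"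
proof -
  have "l1_dist_on \<pi> \<pi>' B \<le> l1_dist \<pi> \<pi>'"
    unfolding l1_dist_def using assms(1) finite_X l1_dist_on_nonneg by (intro member_le_sum) auto
  then show ?thesis using abs_diff_le_l1_dist_on[OF assms, of \<pi> \<pi>'] by linarith
qed

lemma abs_mass_diff_le:
  assumes "B \<subseteq> X" "T \<subseteq> B"
  shows "\<bar>mass \<pi> B T - mass \<pi>' B T\<bar> \<le> l1_dist_on \<pi> \<pi>' B"
proof -
  have "\<bar>mass \<pi> B T - mass \<pi>' B T\<bar> = \<bar>\<Sum>y\<in>T. \<pi> B y - \<pi>' B y\<bar>"
    unfolding mass_def by (simp add: sum_subtractf)
  also have "\<dots> \<le> (\<Sum>y\<in>T. \<bar>\<pi> B y - \<pi>' B y\<bar>)" by (rule sum_abs)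
  also have "\<dots> \<le> l1_dist_on \<pi> \<pi>' B"
    unfolding l1_dist_on_def using assms finite_subset_X by (intro sum_mono2) auto
  finally show ?thesis .
qed

lemma abs_correction_diff_subset:
  assumes "admissible \<pi>" "admissible \<pi>'" "B \<in> overlapping A" "B \<subseteq> A"
  shows "\<bar>correction \<pi> A x B - correction \<pi>' A x B\<bar> \<le> weight B * l1_dist_on \<pi> \<pi>' B"
proof -
  have B: "B \<subseteq> X" using assms(3) unfolding overlapping_def by auto
  have "\<bar>correction \<pi> A x B - correction \<pi>' A x B\<bar>
      = weight B * (if x \<in> B then \<bar>\<pi> B x - \<pi>' B x\<bar> else 0)"
    unfolding correction_def mass_subset[OF assms(1,3,4)] mass_subset[OF assms(2,3,4)]
    using weight_pos[of B] by (auto simp: abs_mult right_diff_distrib[symmetric] abs_minus_commute)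
  also have "\<dots> \<le> weight B * l1_dist_on \<pi> \<pi>' B"
    using abs_diff_le_l1_dist_on[OF B] l1_dist_on_nonneg weight_pos[of B]
    by (intro mult_left_mono) auto
  finally show ?thesis .
qed

lemma abs_correction_diff_not_subset:
  assumes adm: "admissible \<pi>" "admissible \<pi>'" and A: "A \<subseteq> X" "x \<in> A"
    and B: "B \<in> overlapping A" "\<not> B \<subseteq> A"
  shows "\<bar>correction \<pi> A x B - correction \<pi>' A x B\<bar>
    \<le> M ^ card X * (2 * real L * (1 - \<delta>) ^ (L - 2)) * l1_dist_on \<pi> \<pi>' B"
proof -
  have BX: "B \<subseteq> X" using B unfolding overlapping_def by auto
  define s where "s = mass \<pi> B (A \<inter> B)"
  define s' where "s' = mass \<pi>' B (A \<inter> B)"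
  define r where "r = 1 - \<delta>"
  define l where "l = l1_dist_on \<pi> \<pi>' B"
  have s: "0 \<le> s" "s \<le> r" "0 \<le> s'" "s' \<le> r"
    using mass_not_subset[OF adm(1) B] mass_not_subset[OF adm(2) B] \<delta>_pos
    unfolding s_def s'_def r_def by auto
  have s_diff: "\<bar>s - s'\<bar> \<le> l"
    unfolding s_def s'_def l_def using abs_mass_diff_le BX by auto
  have r: "0 \<le> r" "r \<le> 1" using \<delta>_le_half \<delta>_pos unfolding r_def by auto
  have l: "0 \<le> l" unfolding l_def by (rule l1_dist_on_nonneg)
  have p: "0 \<le> p x A" "p x A \<le> 1" using p_nonneg p_le_1 A by auto
  have power_bound: "\<bar>s ^ L - s' ^ L\<bar> \<le> real L * r ^ (L - 2) * l"
    using s r(2) s_diff by (rule abs_power_diff_le_shifted)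
  have own_bound: "\<bar>s ^ (L - 1) * \<pi> B x - s' ^ (L - 1) * \<pi>' B x\<bar> \<le> real L * r ^ (L - 2) * l"
    if x: "x \<in> B"
    using s r(2) admissible_pos[OF adm(2) BX x] admissible_le_1[OF adm(2) BX x] s_diff
      abs_diff_le_l1_dist_on[OF BX x, of \<pi> \<pi>'] L_ge
    unfolding l_def[symmetric] by (intro abs_power_mult_diff_le_shifted) auto
  have "correction \<pi> A x B - correction \<pi>' A x B = weight B * (p x A * (s ^ L - s' ^ L)
      - (if x \<in> B then s ^ (L - 1) * \<pi> B x - s' ^ (L - 1) * \<pi>' B x else 0))"
    unfolding correction_def s_def s'_def by (simp add: algebra_simps)
  then have "\<bar>correction \<pi> A x B - correction \<pi>' A x B\<bar> \<le> weight B * (p x A * \<bar>s ^ L - s' ^ L\<bar>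
      + (if x \<in> B then \<bar>s ^ (L - 1) * \<pi> B x - s' ^ (L - 1) * \<pi>' B x\<bar> else 0))"
    using weight_pos[of B] p
      abs_triangle_ineq4[of "p x A * (s ^ L - s' ^ L)"
        "if x \<in> B then s ^ (L - 1) * \<pi> B x - s' ^ (L - 1) * \<pi>' B x else 0"]
    by (auto simp: abs_mult intro!: mult_left_mono)
  also have "\<dots> \<le> weight B * (1 * (real L * r ^ (L - 2) * l) + real L * r ^ (L - 2) * l)"
    using weight_pos[of B] p power_bound own_bound l r
    by (intro mult_left_mono add_mono mult_mono) auto
  also have "\<dots> = weight B * (2 * real L * r ^ (L - 2)) * l"
    by (simp add: algebra_simps)
  also have "\<dots> \<le> M ^ card X * (2 * real L * r ^ (L - 2)) * l"
    using weight_le[OF BX] r l by (intro mult_right_mono) auto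
  finally show ?thesis unfolding r_def l_def .
qed

lemma abs_correction_diff_le:
  assumes adm: "admissible \<pi>" "admissible \<pi>'" and A: "A \<subseteq> X" "x \<in> A"
    and B: "B \<in> overlapping A"
  shows "\<bar>correction \<pi> A x B - correction \<pi>' A x B\<bar> \<le> weight A * \<eta> * l1_dist_on \<pi> \<pi>' B"
proof (cases "B \<subseteq> A")
  case True
  then have "B \<subset> A" using B unfolding overlapping_def by auto
  then have "weight B * l1_dist_on \<pi> \<pi>' B \<le> weight A * \<eta> * l1_dist_on \<pi> \<pi>' B"
    using weight_psubset_le[OF _ A(1) M_\<eta>] l1_dist_on_nonneg by (intro mult_right_mono) auto
  then show ?thesis using abs_correction_diff_subset[OF adm B True, of x] by linarith
next
  case False
  have "M ^ card X * (2 * real L * (1 - \<delta>) ^ (L - 2)) * l1_dist_on \<pi> \<pi>' B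
      \<le> 1 * \<eta> * l1_dist_on \<pi> \<pi>' B"
    using L_\<eta> l1_dist_on_nonneg by (intro mult_right_mono) auto
  also have "\<dots> \<le> weight A * \<eta> * l1_dist_on \<pi> \<pi>' B"
    using weight_ge_1 \<eta>_pos l1_dist_on_nonneg by (intro mult_right_mono) auto
  finally show ?thesis using abs_correction_diff_not_subset[OF adm A B False] by linarith
qed

lemma abs_update_diff_le:
  assumes adm: "admissible \<pi>" "admissible \<pi>'" and A: "A \<subseteq> X" "x \<in> A"
  shows "\<bar>update \<pi> A x - update \<pi>' A x\<bar> \<le> \<eta> * l1_dist \<pi> \<pi>'"
proof -
  have "\<bar>update \<pi> A x - update \<pi>' A x\<bar>
      = \<bar>\<Sum>B\<in>overlapping A. correction \<pi> A x B - correction \<pi>' A x B\<bar> / weight A"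
    unfolding update_def sum_subtractf using weight_pos[of A]
    by (simp add: diff_divide_distrib[symmetric])
  also have "\<dots> \<le> (\<Sum>B\<in>overlapping A. weight A * \<eta> * l1_dist_on \<pi> \<pi>' B) / weight A"
    using weight_pos[of A]
    by (intro divide_right_mono order_trans[OF sum_abs] sum_mono abs_correction_diff_le[OF adm A]) auto
  also have "\<dots> = \<eta> * (\<Sum>B\<in>overlapping A. l1_dist_on \<pi> \<pi>' B)"
    using weight_pos[of A] by (simp add: sum_distrib_left[symmetric] mult.assoc)
  also have "\<dots> \<le> \<eta> * l1_dist \<pi> \<pi>'"
    unfolding l1_dist_def overlapping_def using \<eta>_pos finite_X l1_dist_on_nonneg
    by (intro mult_left_mono sum_mono2) auto
  finally show ?thesis .
qed

lemma l1_dist_update_le: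
  assumes "admissible \<pi>" "admissible \<pi>'"
  shows "l1_dist (update \<pi>) (update \<pi>') \<le> l1_dist \<pi> \<pi>' / 2"
proof -
  have "l1_dist (update \<pi>) (update \<pi>') \<le> (\<Sum>A\<in>Pow X. \<Sum>x\<in>A. \<eta> * l1_dist \<pi> \<pi>')"
    unfolding l1_dist_def[of "update \<pi>"] l1_dist_on_def
    using abs_update_diff_le[OF assms] by (intro sum_mono) auto
  also have "\<dots> = (\<eta> * (\<Sum>A\<in>Pow X. real (card A))) * l1_dist \<pi> \<pi>'"
    by (simp add: sum_distrib_left sum_distrib_right mult.commute mult.left_commute)
  also have "\<dots> \<le> 1 / 2 * l1_dist \<pi> \<pi>'"
    using \<eta>_small l1_dist_nonneg by (intro mult_right_mono) auto
  finally show ?thesis by simp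
qed

lemma correction_ge:
  assumes adm: "admissible \<pi>" and A: "A \<subseteq> X" "x \<in> A" and B: "B \<in> overlapping A"
  shows "- (weight A * (\<delta> / (2 * real (card (Pow X))))) \<le> correction \<pi> A x B"
proof -
  define c where "c = \<delta> / (2 * real (card (Pow X)))"
  have BX: "B \<subseteq> X" using B unfolding overlapping_def by auto
  have p: "0 \<le> p x A" "p x A \<le> 1" using p_nonneg p_le_1 A by auto
  have \<pi>: "0 \<le> \<pi> B x" "\<pi> B x \<le> 1" if "x \<in> B"
    using admissible_pos[OF adm BX that] admissible_le_1[OF adm BX that] by auto
  have c: "0 \<le> c" unfolding c_def using \<delta>_pos card_Pow_pos by simp
  have "weight B * (- 1) \<le> correction \<pi> A x B" and "weight B \<le> weight A * c" if "B \<subseteq> A"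
  proof -
    have "- 1 \<le> p x A - (if x \<in> B then \<pi> B x else 0)" using p \<pi> by auto
    then show "weight B * (- 1) \<le> correction \<pi> A x B"
      unfolding correction_def mass_subset[OF adm B that] using weight_pos[of B]
      by (intro mult_left_mono) auto
    have "B \<subset> A" using B that unfolding overlapping_def by auto
    then show "weight B \<le> weight A * c" using weight_psubset_le[OF _ A(1) M_\<delta>] unfolding c_def by auto
  qed
  moreover have "weight B * (- ((1 - \<delta>) ^ (L - 2))) \<le> correction \<pi> A x B"
    and "weight B * (1 - \<delta>) ^ (L - 2) \<le> weight A * c" if "\<not> B \<subseteq> A"
  proof -
    define s where "s = mass \<pi> B (A \<inter> B)"
    have s: "0 \<le> s" "s \<le> 1 - \<delta>" using mass_not_subset[OF adm B that] \<delta>_pos unfolding s_def by auto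
    have r01: "0 \<le> 1 - \<delta>" "1 - \<delta> \<le> 1" using \<delta>_le_half \<delta>_pos by auto
    then have r: "0 \<le> 1 - \<delta>" "(1 - \<delta>) ^ (L - 1) \<le> (1 - \<delta>) ^ (L - 2)"
      by (auto intro!: power_decreasing)
    have "s ^ (L - 1) \<le> (1 - \<delta>) ^ (L - 2)" using s r power_mono[of s "1 - \<delta>" "L - 1"] by linarith
    then have "(if x \<in> B then s ^ (L - 1) * \<pi> B x else 0) \<le> (1 - \<delta>) ^ (L - 2)"
      using \<pi> s r mult_mono[of "s ^ (L - 1)" "(1 - \<delta>) ^ (L - 2)" "\<pi> B x" 1] by auto
    moreover have "0 \<le> p x A * s ^ L" using p s by simp
    ultimately show "weight B * (- ((1 - \<delta>) ^ (L - 2))) \<le> correction \<pi> A x B"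
      unfolding correction_def s_def[symmetric] using weight_pos[of B] by (intro mult_left_mono) auto
    have "(1 - \<delta>) ^ (L - 2) \<le> 2 * real L * (1 - \<delta>) ^ (L - 2)"
      using mult_right_mono[of 1 "2 * real L" "(1 - \<delta>) ^ (L - 2)"] L_ge r by simp
    then have "weight B * (1 - \<delta>) ^ (L - 2) \<le> M ^ card X * (2 * real L * (1 - \<delta>) ^ (L - 2))"
      using weight_le[OF BX] r M_ge by (intro mult_mono) auto
    also have "\<dots> \<le> 1 * c" using L_\<delta> unfolding c_def by simp
    also have "\<dots> \<le> weight A * c" using weight_ge_1 c by (rule mult_right_mono)
    finally show "weight B * (1 - \<delta>) ^ (L - 2) \<le> weight A * c" .
  qed
  ultimately show ?thesis unfolding c_def[symmetric] by (cases "B \<subseteq> A") auto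
qed

lemma update_ge:
  assumes adm: "admissible \<pi>" and A: "A \<subseteq> X" "x \<in> A"
  shows "\<delta> \<le> update \<pi> A x"
proof -
  define c where "c = \<delta> / (2 * real (card (Pow X)))"
  have "card (overlapping A) \<le> card (Pow X)"
    using finite_X by (intro card_mono) (auto simp: overlapping_def)
  moreover have "0 \<le> weight A * c" using weight_pos[of A] \<delta>_pos card_Pow_pos unfolding c_def by simp
  ultimately have "real (card (overlapping A)) * (weight A * c) \<le> real (card (Pow X)) * (weight A * c)"
    by (intro mult_right_mono) auto
  then have "- (real (card (Pow X)) * (weight A * c)) \<le> real (card (overlapping A)) * - (weight A * c)"
    by simp
  also have "\<dots> \<le> (\<Sum>B\<in>overlapping A. correction \<pi> A x B)"
    using correction_ge[OF adm A] unfolding c_def by (intro sum_bounded_below)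
  finally have "- (\<delta> / 2) * weight A \<le> (\<Sum>B\<in>overlapping A. correction \<pi> A x B)"
    using card_Pow_pos unfolding c_def by (simp add: field_simps)
  then have "- (\<delta> / 2) \<le> (\<Sum>B\<in>overlapping A. correction \<pi> A x B) / weight A"
    using weight_pos[of A] by (simp add: pos_le_divide_eq)
  then show ?thesis unfolding update_def using p_ge[OF A] \<delta>_pos by linarith
qed

lemma sum_correction:
  assumes "A \<subseteq> X" "A \<noteq> {}" "B \<in> overlapping A"
  shows "(\<Sum>x\<in>A. correction \<pi> A x B) = 0"
proof -
  define s where "s = mass \<pi> B (A \<inter> B)"
  have "(\<Sum>x\<in>A. if x \<in> B then s ^ (L - 1) * \<pi> B x else 0) = (\<Sum>x\<in>A \<inter> B. s ^ (L - 1) * \<pi> B x)"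
    using sum.inter_restrict[OF finite_subset_X[OF assms(1)]] by metis
  also have "\<dots> = s ^ L"
    unfolding sum_distrib_left[symmetric] s_def[unfolded mass_def, symmetric]
    using L_ge power_minus_mult[of L s] by simp
  finally have "(\<Sum>x\<in>A. if x \<in> B then s ^ (L - 1) * \<pi> B x else 0) = s ^ L" .
  moreover have "(\<Sum>x\<in>A. correction \<pi> A x B)
      = weight B * (s ^ L * (\<Sum>x\<in>A. p x A) - (\<Sum>x\<in>A. if x \<in> B then s ^ (L - 1) * \<pi> B x else 0))"
    unfolding correction_def s_def[symmetric]
    by (simp add: sum_distrib_left sum_distrib_right sum_subtractf algebra_simps)
  ultimately show ?thesis using sum_p[OF assms(1,2)] by simp
qed

lemma mass_update:
  assumes "A \<subseteq> X" "A \<noteq> {}"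
  shows "mass (update \<pi>) A A = 1"
proof -
  have "mass (update \<pi>) A A
      = (\<Sum>x\<in>A. p x A) + (\<Sum>B\<in>overlapping A. \<Sum>x\<in>A. correction \<pi> A x B) / weight A"
    unfolding mass_def update_def
    by (simp add: sum.distrib sum_divide_distrib[symmetric] sum.swap[of _ A])
  then show ?thesis using sum_correction[OF assms] sum_p[OF assms] by simp
qed

lemma admissible_update:
  assumes "admissible \<pi>"
  shows "admissible (update \<pi>)"
  unfolding admissible_def using update_ge[OF assms] mass_update by simp

definition uniform :: "'a set \<Rightarrow> 'a \<Rightarrow> real" where
  "uniform B y = 1 / real (card B)"

lemma admissible_uniform: "admissible uniform"
  unfolding admissible_def
proof (intro allI impI conjI ballI)
  fix A assume A: "A \<subseteq> X" "A \<noteq> {}"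
  have card_A: "1 \<le> card A" "card A \<le> card X"
    using A finite_subset_X finite_X by (auto simp: Suc_le_eq card_gt_0_iff card_mono)
  show "mass uniform A A = 1" unfolding mass_def uniform_def using card_A by simp
  have "\<delta> * real (card A) \<le> \<delta> * (2 * real (card X))" using card_A \<delta>_pos by simp
  then have "\<delta> * real (card A) \<le> 1" using \<delta>_card_le by linarith
  then show "\<delta> \<le> uniform A x" for x unfolding uniform_def using card_A by (simp add: pos_le_divide_eq)
qed

definition iterate :: "nat \<Rightarrow> 'a set \<Rightarrow> 'a \<Rightarrow> real" where
  "iterate k = (update ^^ k) uniform"

lemma iterate_Suc: "iterate (Suc k) = update (iterate k)"
  unfolding iterate_def by simp

lemma admissible_iterate: "admissible (iterate k)"
  by (induction k) (auto simp: iterate_def admissible_uniform admissible_update)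

lemma l1_dist_iterate_Suc: "l1_dist (iterate (Suc k)) (iterate k) \<le> (1 / 2) ^ k * l1_dist (iterate 1) (iterate 0)"
proof (induction k)
  case (Suc k)
  have "l1_dist (iterate (Suc (Suc k))) (iterate (Suc k)) \<le> l1_dist (iterate (Suc k)) (iterate k) / 2"
    using l1_dist_update_le[OF admissible_iterate[of "Suc k"] admissible_iterate[of k]]
    by (simp only: iterate_Suc)
  also have "\<dots> \<le> (1 / 2) ^ Suc k * l1_dist (iterate 1) (iterate 0)" using Suc by simp
  finally show ?case .
qed simp

lemma convergent_iterate:
  assumes "A \<subseteq> X" "x \<in> A"
  shows "convergent (\<lambda>k. iterate k A x)"
proof -
  define C where "C = l1_dist (iterate 1) (iterate 0)"
  have "summable (\<lambda>k. iterate (Suc k) A x - iterate k A x)"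
  proof (rule summable_comparison_test')
    show "summable (\<lambda>k. C * (1 / 2) ^ k)" by (intro summable_mult summable_geometric) simp
    show "norm (iterate (Suc k) A x - iterate k A x) \<le> C * (1 / 2) ^ k" for k
      using abs_diff_le_l1_dist[OF assms, of "iterate (Suc k)" "iterate k"] l1_dist_iterate_Suc[of k]
      unfolding C_def by (simp add: mult.commute)
  qed
  then have "(\<lambda>n. \<Sum>k<n. iterate (Suc k) A x - iterate k A x) \<longlonglongrightarrow> (\<Sum>k. iterate (Suc k) A x - iterate k A x)"
    by (rule summable_LIMSEQ)
  then have "(\<lambda>n. iterate n A x - iterate 0 A x) \<longlonglongrightarrow> (\<Sum>k. iterate (Suc k) A x - iterate k A x)"
    by (simp add: sum_lessThan_telescope[of "\<lambda>k. iterate k A x"])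
  then have "(\<lambda>n. (iterate n A x - iterate 0 A x) + iterate 0 A x)
      \<longlonglongrightarrow> (\<Sum>k. iterate (Suc k) A x - iterate k A x) + iterate 0 A x"
    by (intro tendsto_add tendsto_const)
  then show ?thesis unfolding convergent_def by auto
qed

definition fixed_point :: "'a set \<Rightarrow> 'a \<Rightarrow> real" where
  "fixed_point A x = lim (\<lambda>k. iterate k A x)"

lemma iterate_tendsto: "A \<subseteq> X \<Longrightarrow> x \<in> A \<Longrightarrow> (\<lambda>k. iterate k A x) \<longlonglongrightarrow> fixed_point A x"
  unfolding fixed_point_def using convergent_iterate convergent_LIMSEQ_iff by blast

lemma admissible_fixed_point: "admissible fixed_point"
  unfolding admissible_def
proof (intro allI impI conjI ballI)
  fix A assume A: "A \<subseteq> X" "A \<noteq> {}"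
  show "\<delta> \<le> fixed_point A x" if "x \<in> A" for x
    using LIMSEQ_le_const[OF iterate_tendsto[OF A(1) that], of \<delta>]
      admissible_ge[OF admissible_iterate A(1) that] by blast
  have "(\<lambda>k. mass (iterate k) A A) \<longlonglongrightarrow> mass fixed_point A A"
    unfolding mass_def using iterate_tendsto A(1) by (intro tendsto_sum) auto
  moreover have "mass (iterate k) A A = 1" for k
    using admissible_iterate A unfolding admissible_def by auto
  ultimately show "mass fixed_point A A = 1" by (simp add: LIMSEQ_const_iff)
qed

lemma update_fixed_point:
  assumes A: "A \<subseteq> X" "x \<in> A"
  shows "update fixed_point A x = fixed_point A x"
proof -
  have "(\<lambda>k. l1_dist fixed_point (iterate k)) \<longlonglongrightarrow> (\<Sum>B\<in>Pow X. \<Sum>y\<in>B. \<bar>fixed_point B y - fixed_point B y\<bar>)"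
    unfolding l1_dist_def l1_dist_on_def
    by (intro tendsto_sum tendsto_rabs tendsto_diff tendsto_const iterate_tendsto) auto
  then have "(\<lambda>k. \<eta> * l1_dist fixed_point (iterate k) + \<bar>iterate (Suc k) A x - fixed_point A x\<bar>)
      \<longlonglongrightarrow> \<eta> * 0 + \<bar>fixed_point A x - fixed_point A x\<bar>"
    by (intro tendsto_add tendsto_mult tendsto_const tendsto_rabs tendsto_diff
        LIMSEQ_Suc[OF iterate_tendsto[OF A]]) simp_all
  moreover have "\<bar>update fixed_point A x - fixed_point A x\<bar>
      \<le> \<eta> * l1_dist fixed_point (iterate k) + \<bar>iterate (Suc k) A x - fixed_point A x\<bar>" for k
    using abs_update_diff_le[OF admissible_fixed_point admissible_iterate A, of k]
    unfolding iterate_Suc by linarith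
  ultimately have "\<bar>update fixed_point A x - fixed_point A x\<bar> \<le> 0"
    by (intro LIMSEQ_le_const) auto
  then show ?thesis by simp
qed

lemma balance_fixed_point:
  assumes A: "A \<subseteq> X" "x \<in> A"
  shows "p x A * (\<Sum>B\<in>{B\<in>Pow X. A \<inter> B \<noteq> {}}. weight B * mass fixed_point B (A \<inter> B) ^ L)
    = (\<Sum>B\<in>{B\<in>Pow X. x \<in> B}. weight B * mass fixed_point B (A \<inter> B) ^ (L - 1) * fixed_point B x)"
proof -
  let ?m = "\<lambda>B. mass fixed_point B (A \<inter> B)"
  have m_A: "?m A = 1" using admissible_fixed_point A unfolding admissible_def by auto
  have nonempty: "{B\<in>Pow X. A \<inter> B \<noteq> {}} = insert A (overlapping A)"
    using A unfolding overlapping_def by auto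
  have containing: "{B\<in>Pow X. x \<in> B} = insert A {B\<in>overlapping A. x \<in> B}"
    using A unfolding overlapping_def by auto
  have A_notin: "A \<notin> overlapping A" unfolding overlapping_def by simp
  define g where "g B = weight B * ?m B ^ (L - 1) * fixed_point B x" for B
  have g_A: "g A = weight A * fixed_point A x" unfolding g_def using m_A by simp
  have fixed: "p x A * weight A + (\<Sum>B\<in>overlapping A. correction fixed_point A x B)
      = fixed_point A x * weight A"
    using update_fixed_point[OF A] weight_pos[of A] unfolding update_def by (simp add: field_simps)
  have corrections: "(\<Sum>B\<in>overlapping A. correction fixed_point A x B)
      = p x A * (\<Sum>B\<in>overlapping A. weight B * ?m B ^ L) - (\<Sum>B\<in>overlapping A. if x \<in> B then g B else 0)"
    unfolding correction_def g_def sum_distrib_left sum_subtractf[symmetric]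
    by (intro sum.cong) (auto simp: algebra_simps)
  have "(\<Sum>B\<in>{B\<in>Pow X. A \<inter> B \<noteq> {}}. weight B * ?m B ^ L)
      = weight A + (\<Sum>B\<in>overlapping A. weight B * ?m B ^ L)"
    unfolding nonempty using A_notin finite_overlapping m_A by simp
  moreover have "(\<Sum>B\<in>{B\<in>Pow X. x \<in> B}. g B) = g A + (\<Sum>B\<in>overlapping A. if x \<in> B then g B else 0)"
    unfolding containing sum.inter_filter[OF finite_overlapping, symmetric]
    using A_notin finite_overlapping by simp
  ultimately show ?thesis
    unfolding g_def[symmetric] using g_A fixed corrections by (simp add: algebra_simps)
qed

theorem unrestricted_gnl: "unrestricted_gnl X p"
proof (rule subset_nests.unrestricted_gnl_if_balanced)
  show "subset_nests X weight fixed_point L"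
    using finite_X weight_pos admissible_pos[OF admissible_fixed_point] L_ge
    by unfold_locales auto
qed (rule balance_fixed_point)

end

lemma ex_choice_lower_bound:
  assumes "finite X" "X \<noteq> {}" "stochastic_choice X p"
  obtains \<delta> :: real where "0 < \<delta>" "\<delta> \<le> 1 / 2" "\<And>A x. A \<subseteq> X \<Longrightarrow> x \<in> A \<Longrightarrow> 2 * \<delta> \<le> p x A"
proof -
  define pmin where "pmin = Min {p x A | A x. A \<subseteq> X \<and> x \<in> A}"
  have "{p x A | A x. A \<subseteq> X \<and> x \<in> A} \<subseteq> (\<lambda>(A, x). p x A) ` (Pow X \<times> X)" by force
  then have fin: "finite {p x A | A x. A \<subseteq> X \<and> x \<in> A}"
    by (rule finite_subset) (simp add: assms(1))
  have pmin_le: "pmin \<le> p x A" if "A \<subseteq> X" "x \<in> A" for A x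
    unfolding pmin_def using fin that by (intro Min_le) auto
  have p_bounds: "0 < p x A \<and> p x A \<le> 1" if "A \<subseteq> X" "x \<in> A" for A x
  proof -
    have "A \<noteq> {}" "x \<in> X" using that by auto
    then show ?thesis using assms(3) that unfolding stochastic_choice_def by blast
  qed
  obtain x0 where "x0 \<in> X" using assms(2) by auto
  then have "pmin \<in> {p x A | A x. A \<subseteq> X \<and> x \<in> A}"
    unfolding pmin_def using fin by (intro Min_in) auto
  then obtain A x where "pmin = p x A" "A \<subseteq> X" "x \<in> A" by blast
  then have "0 < pmin" using p_bounds by simp
  moreover have "pmin \<le> 1" using pmin_le[of X x0] p_bounds[of X x0] \<open>x0 \<in> X\<close> by simp
  ultimately show ?thesis using pmin_le by (intro that[of "pmin / 2"]) auto
qed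

lemma ex_gnl_contraction:
  assumes finite: "finite X" and nonempty: "X \<noteq> {}" and choice: "stochastic_choice X p"
  shows "\<exists>\<delta> M \<eta> L. gnl_contraction X p \<delta> M \<eta> L"
proof -
  obtain \<delta> where \<delta>: "0 < \<delta>" "\<delta> \<le> 1 / 2" "\<And>A x. A \<subseteq> X \<Longrightarrow> x \<in> A \<Longrightarrow> 2 * \<delta> \<le> p x A"
    using ex_choice_lower_bound[OF assms] by blast
  define P where "P = real (card (Pow X))"
  define S where "S = (\<Sum>A\<in>Pow X. real (card A))"
  have P: "0 < P" unfolding P_def using finite by (simp add: card_Pow)
  have S: "0 \<le> S" unfolding S_def by (simp add: sum_nonneg)
  define \<eta> where "\<eta> = 1 / (2 * (S + 1))"
  have \<eta>: "0 < \<eta>" "\<eta> * S \<le> 1 / 2" unfolding \<eta>_def using S by (auto simp: field_simps)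
  define \<theta> where "\<theta> = min \<eta> (\<delta> / (2 * P))"
  have \<theta>: "0 < \<theta>" unfolding \<theta>_def using \<eta> \<delta> P by simp
  define M where "M = max 1 (1 / \<theta>)"
  have M: "1 \<le> M" "1 / M \<le> \<theta>"
    unfolding M_def using \<theta> by (auto simp: field_simps max_def)
  obtain L :: nat where L: "2 \<le> L" "real L * (1 - \<delta>) ^ (L - 2) \<le> \<theta> / (2 * M ^ card X)"
    using ex_nat_times_power_le[of "1 - \<delta>" "\<theta> / (2 * M ^ card X)"] \<delta> \<theta> M by auto
  then have "M ^ card X * (2 * real L * (1 - \<delta>) ^ (L - 2)) \<le> \<theta>"
    using M by (simp add: field_simps)
  then have "gnl_contraction X p \<delta> M \<eta> L"
    using assms \<delta> \<eta> M L unfolding \<theta>_def P_def S_def by unfold_locales auto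
  then show ?thesis by blast
qed

theorem corollary1:
  fixes X :: "'a set" and p :: "'a \<Rightarrow> 'a set \<Rightarrow> real"
  assumes "finite X"
    and "stochastic_choice X p"
  shows "unrestricted_gnl X p"
proof (cases "X = {}")
  case True
  have "subset_nests X (\<lambda>_. 1) (\<lambda>_ _. 1) 1"
    using assms(1) by unfold_locales auto
  then show ?thesis by (rule subset_nests.unrestricted_gnl_if_balanced) (use True in auto)
next
  case False
  then obtain \<delta> M \<eta> L where "gnl_contraction X p \<delta> M \<eta> L"
    using ex_gnl_contraction assms by blast
  then show ?thesis by (rule gnl_contraction.unrestricted_gnl)
qed

end
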